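(* Let $M^4$ be a smooth $4$-manifold, $\sigma$ a smooth non-constant function on $M^4$ with $\sigma_i:=\partial\sigma/\partial x^i$, and $h_{11}(t)>0$ a Riemannian metric on $\mathbb{R}$ with $h^{11}=1/h_{11}$ and $\text{\textsc{k}}^1_{11}=\frac{h^{11}}{2}\frac{dh_{11}}{dt}$. On the domain of $J^{1*}(\mathbb{R},M^4)$ (coordinates $(t,x^i,p^1_i)$) where $\mathcal{P}^{1111}:=p^1_1p^1_2p^1_3p^1_4>0$, consider $\overset{*}{H}=4e^{-2\sigma(x)}h_{11}(t)[\mathcal{P}^{1111}]^{1/2}$. Then the Cartan canonical $N$-linear connection of $\overset{*}{H}$ has adapted components (no sum over $i,j,k$) $$C\Gamma(N)=\left(\text{\textsc{k}}^1_{11},\ A^i_{j1}=0,\ H^i_{jk}=4\delta^i_j\delta^i_k\sigma_i,\ C^{j(k)}_{i(1)}=\mathsf{C}^{jk}_i\cdot\frac{p^1_i}{p^1_jp^1_k}\right),$$ where $\mathsf{C}^{jk}_i=\frac{1-2\delta^{jk}-2\delta^j_i-2\delta^k_i+8\delta^j_i\delta^k_i}{8}$, i.e. $\mathsf{C}^{jk}_i=\frac18$ if $i,j,k$ are pairwise distinct, $-\frac18$ if exactly two of $i,j,k$ coincide, and $\frac38$ if $i=j=k$.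
   Context: The fundamental metrical d-tensor is $\overset{*}{g}{}^{ij}=\frac{h^{11}}{2}\frac{\partial^2\overset{*}{H}}{\partial p^1_i\partial p^1_j}$, with inverse matrix $(\overset{*}{g}_{ij})$. The canonical nonlinear connection has components $\underset{1}{N}{}^{(1)}_{(i)1}=\text{\textsc{k}}^1_{11}p^1_i$ and $\underset{2}{N}{}^{(1)}_{(i)j}=-4\sigma_ip^1_i\delta_{ij}$ (no sum), and produces the adapted vector fields $\frac{\delta}{\delta t}=\frac{\partial}{\partial t}-\text{\textsc{k}}^1_{11}p^1_r\frac{\partial}{\partial p^1_r}$, $\frac{\delta}{\delta x^i}=\frac{\partial}{\partial x^i}+4\sigma_ip^1_i\frac{\partial}{\partial p^1_i}$ (no sum over $i$). The Cartan canonical connection components are defined by (summation over repeated indices) $A^i_{j1}=\frac{\overset{*}{g}{}^{il}}{2}\frac{\delta\overset{*}{g}_{lj}}{\delta t}$, $H^i_{jk}=\frac{\overset{*}{g}{}^{ir}}{2}\left(\frac{\delta\overset{*}{g}_{jr}}{\delta x^k}+\frac{\delta\overset{*}{g}_{kr}}{\delta x^j}-\frac{\delta\overset{*}{g}_{jk}}{\delta x^r}\right)$, $C^{j(k)}_{i(1)}=-\frac{\overset{*}{g}_{ir}}{2}\left(\frac{\partial\overset{*}{g}{}^{jr}}{\partial p^1_k}+\frac{\partial\overset{*}{g}{}^{kr}}{\partial p^1_j}-\frac{\partial\overset{*}{g}{}^{jk}}{\partial p^1_r}\right)$, together with the component $\text{\textsc{k}}^1_{11}$ on the time direction. *)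

theory Defs
  imports "HOL-Analysis.Analysis"
begin

text \<open>Local coordinates on J^{1*}(R,M^4): (t, x, p) with x = (x^1..x^4), p = (p^1_1..p^1_4),
  both in real^4.  Functions on the jet space have type real => real^4 => real^4 => real.\<close>

type_synonym jfun = "real \<Rightarrow> real^4 \<Rightarrow> real^4 \<Rightarrow> real"

definition pdiff :: "'n::finite \<Rightarrow> (real^'n \<Rightarrow> real) \<Rightarrow> real^'n \<Rightarrow> real" where
  "pdiff i f x = deriv (\<lambda>s. f (x + s *\<^sub>R axis i 1)) 0"

definition smooth_on :: "(real^'n::finite) set \<Rightarrow> (real^'n \<Rightarrow> real) \<Rightarrow> bool" where
  "smooth_on U f \<longleftrightarrow> (\<forall>ks. (fold pdiff ks f) differentiable_on U)"

definition smooth_real :: "(real \<Rightarrow> real) \<Rightarrow> bool" where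
  "smooth_real h \<longleftrightarrow> (\<forall>n. ((deriv ^^ n) h) differentiable_on UNIV)"

definition d_t :: "jfun \<Rightarrow> jfun" where
  "d_t F t x p = deriv (\<lambda>s. F s x p) t"
definition d_x :: "4 \<Rightarrow> jfun \<Rightarrow> jfun" where
  "d_x i F t x p = deriv (\<lambda>s. F t (x + s *\<^sub>R axis i 1) p) 0"
definition d_p :: "4 \<Rightarrow> jfun \<Rightarrow> jfun" where
  "d_p i F t x p = deriv (\<lambda>s. F t x (p + s *\<^sub>R axis i 1)) 0"

definition kappa :: "(real \<Rightarrow> real) \<Rightarrow> real \<Rightarrow> real" where
  "kappa h t = (1 / h t) / 2 * deriv h t"

definition Hstar :: "(real^4 \<Rightarrow> real) \<Rightarrow> (real \<Rightarrow> real) \<Rightarrow> jfun" where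
  "Hstar \<sigma> h t x p = 4 * exp (-2 * \<sigma> x) * h t * sqrt (p$1 * p$2 * p$3 * p$4)"

definition g_up :: "(real \<Rightarrow> real) \<Rightarrow> jfun \<Rightarrow> real \<Rightarrow> real^4 \<Rightarrow> real^4 \<Rightarrow> real^4^4" where
  "g_up h H t x p = (\<chi> i j. (1 / h t) / 2 * d_p i (d_p j H) t x p)"
definition g_dn :: "(real \<Rightarrow> real) \<Rightarrow> jfun \<Rightarrow> real \<Rightarrow> real^4 \<Rightarrow> real^4 \<Rightarrow> real^4^4" where
  "g_dn h H t x p = matrix_inv (g_up h H t x p)"

text \<open>Adapted vector fields of the canonical nonlinear connection
  N1_(i)1 = kappa p_i, N2_(i)j = -4 sigma_i p_i delta_ij.\<close>
definition delta_t :: "(real \<Rightarrow> real) \<Rightarrow> jfun \<Rightarrow> jfun" where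
  "delta_t h F t x p = d_t F t x p - kappa h t * (\<Sum>r\<in>UNIV. p$r * d_p r F t x p)"
definition delta_x :: "(real^4 \<Rightarrow> real) \<Rightarrow> 4 \<Rightarrow> jfun \<Rightarrow> jfun" where
  "delta_x \<sigma> i F t x p = d_x i F t x p + 4 * pdiff i \<sigma> x * p$i * d_p i F t x p"

definition cartan_A :: "(real^4 \<Rightarrow> real) \<Rightarrow> (real \<Rightarrow> real) \<Rightarrow> jfun \<Rightarrow> 4 \<Rightarrow> 4 \<Rightarrow> jfun" where
  "cartan_A \<sigma> h H i j t x p =
     (\<Sum>l\<in>UNIV. g_up h H t x p $ i $ l / 2 *
        delta_t h (\<lambda>t' x' p'. g_dn h H t' x' p' $ l $ j) t x p)"

definition cartan_H :: "(real^4 \<Rightarrow> real) \<Rightarrow> (real \<Rightarrow> real) \<Rightarrow> jfun \<Rightarrow> 4 \<Rightarrow> 4 \<Rightarrow> 4 \<Rightarrow> jfun" where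
  "cartan_H \<sigma> h H i j k t x p =
     (\<Sum>r\<in>UNIV. g_up h H t x p $ i $ r / 2 *
        ( delta_x \<sigma> k (\<lambda>t' x' p'. g_dn h H t' x' p' $ j $ r) t x p
        + delta_x \<sigma> j (\<lambda>t' x' p'. g_dn h H t' x' p' $ k $ r) t x p
        - delta_x \<sigma> r (\<lambda>t' x' p'. g_dn h H t' x' p' $ j $ k) t x p))"

text \<open>cartan_C h H i j k = C^{j(k)}_{i(1)}.\<close>
definition cartan_C :: "(real \<Rightarrow> real) \<Rightarrow> jfun \<Rightarrow> 4 \<Rightarrow> 4 \<Rightarrow> 4 \<Rightarrow> jfun" where
  "cartan_C h H i j k t x p =
     - (\<Sum>r\<in>UNIV. g_dn h H t x p $ i $ r / 2 *
        ( d_p k (\<lambda>t' x' p'. g_up h H t' x' p' $ j $ r) t x p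
        + d_p j (\<lambda>t' x' p'. g_up h H t' x' p' $ k $ r) t x p
        - d_p r (\<lambda>t' x' p'. g_up h H t' x' p' $ j $ k) t x p))"

definition kdelta :: "4 \<Rightarrow> 4 \<Rightarrow> real" where
  "kdelta a b = (if a = b then 1 else 0)"

definition Cconst :: "4 \<Rightarrow> 4 \<Rightarrow> 4 \<Rightarrow> real" where
  "Cconst i j k = (1 - 2 * kdelta j k - 2 * kdelta j i - 2 * kdelta k i
                   + 8 * kdelta j i * kdelta k i) / 8"

end

theory Submission
  imports Defs
begin

text \<open>In the momenta the Hamiltonian is a multiple of \<open>(p\<^sub>1p\<^sub>2p\<^sub>3p\<^sub>4)\<^sup>1\<^sup>/\<^sup>2\<close>,
  so all its \<open>p\<close>-derivatives come from \<open>\<partial>p\<^sub>m/\<partial>p\<^sub>k = \<delta>\<^sub>m\<^sub>k\<close>: the metric is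
  \<open>g\<^sup>i\<^sup>j = e\<^sup>-\<^sup>2\<^sup>\<sigma> \<surd>P (1 - 2\<delta>\<^sub>i\<^sub>j) / (2p\<^sub>ip\<^sub>j)\<close>, and since the \<open>4\<times>4\<close> matrix
  \<open>1 - 2\<delta>\<^sub>i\<^sub>j\<close> squares to \<open>4\<delta>\<^sub>i\<^sub>j\<close> its inverse is
  \<open>g\<^sub>i\<^sub>j = e\<^sup>2\<^sup>\<sigma> p\<^sub>ip\<^sub>j (1 - 2\<delta>\<^sub>i\<^sub>j) / (2\<surd>P)\<close>. The factor \<open>h\<^sub>1\<^sub>1\<close> cancels in the
  metric, so \<open>g\<^sub>i\<^sub>j\<close> is independent of \<open>t\<close>, and it is homogeneous of degree zero under
  the scaling \<open>p \<mapsto> \<lambda>p\<close> generated by the \<open>\<kappa> p\<^sub>r \<partial>/\<partial>p\<^sub>r\<close> term; hence \<open>A = 0\<close>.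
  In \<open>x\<close> the metric varies only through \<open>e\<^sup>2\<^sup>\<sigma>\<close>, so every \<open>\<delta>/\<delta>x\<^sup>k\<close>-derivative
  is \<open>\<sigma>\<^sub>k\<close> times an explicit rational function of \<open>p\<close>.\<close>

definition p_prod :: "real^4 \<Rightarrow> real" where
  "p_prod p = p$1 * p$2 * p$3 * p$4"

abbreviation metric_sign :: "4 \<Rightarrow> 4 \<Rightarrow> real" where
  "metric_sign a b \<equiv> 1 - 2 * kdelta a b"

lemma nth_add_scaleR_axis: "(p + s *\<^sub>R axis k (1::real)) $ m = p$m + s * kdelta m k"
  by (simp add: axis_def kdelta_def)

lemma p_prod_pos_nonzero: "p_prod p > 0 \<Longrightarrow> p$m \<noteq> 0"
  using exhaust_4[of m] by (auto simp: p_prod_def)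

lemma p_prod_add_scaleR_axis:
  "p$k \<noteq> 0 \<Longrightarrow> p_prod (p + s *\<^sub>R axis k 1) = p_prod p * (1 + s / p$k)"
  unfolding p_prod_def nth_add_scaleR_axis using exhaust_4[of k]
  by (auto simp: kdelta_def field_simps)

lemma deriv_transform_open:
  assumes "open S" "x \<in> S" "\<And>s. s \<in> S \<Longrightarrow> f s = g s" "(g has_real_derivative D) (at x)"
  shows "deriv f x = D"
  by (rule DERIV_imp_deriv, rule has_field_derivative_transform_within_open[OF assms(4,1,2)])
     (simp add: assms(3))

lemma d_p_transform:
  assumes "p_prod p > 0" "\<And>q. p_prod q > 0 \<Longrightarrow> F t x q = G q"
    and "((\<lambda>s. G (p + s *\<^sub>R axis k 1)) has_real_derivative D) (at 0)"
  shows "d_p k F t x p = D"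
proof -
  let ?S = "{s. 0 < p_prod p * (1 + s / p$k)}"
  have "open ?S"
    using p_prod_pos_nonzero[OF assms(1)] by (intro open_Collect_less continuous_intros) auto
  moreover have "0 \<in> ?S" using assms(1) by simp
  moreover have "F t x (p + s *\<^sub>R axis k 1) = G (p + s *\<^sub>R axis k 1)" if "s \<in> ?S" for s
    using that assms(2) p_prod_add_scaleR_axis[OF p_prod_pos_nonzero[OF assms(1)]] by simp
  ultimately show ?thesis
    unfolding d_p_def by (rule deriv_transform_open[OF _ _ _ assms(3)])
qed

lemma sum_metric_sign_square: "(\<Sum>r\<in>UNIV. metric_sign i r * metric_sign r j) = 4 * kdelta i j"
  using exhaust_4[of i] exhaust_4[of j] by (auto simp: sum_4 kdelta_def)

lemma matrix_inv_unique:
  fixes A B :: "'a::semiring_1^'n^'n"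
  assumes "A ** B = mat 1" "B ** A = mat 1"
  shows "matrix_inv A = B"
  unfolding matrix_inv_def
proof (rule some_equality)
  show "A ** B = mat 1 \<and> B ** A = mat 1" using assms by simp
  fix C assume "A ** C = mat 1 \<and> C ** A = mat 1"
  then have "C = C ** (A ** B)" "C ** A = mat 1" by (simp_all add: assms)
  then show "C = B" by (simp add: matrix_mul_assoc)
qed

lemma d_p_Hstar:
  assumes "p_prod p > 0"
  shows "d_p j (Hstar \<sigma> h) t x p = 4 * exp (-2 * \<sigma> x) * h t * sqrt (p_prod p) / (2 * p$j)"
proof (rule d_p_transform[OF assms])
  show "Hstar \<sigma> h t x q = 4 * exp (-2 * \<sigma> x) * h t * sqrt (p_prod q)" for q
    by (simp add: Hstar_def p_prod_def)
  have "p$j \<noteq> 0" using p_prod_pos_nonzero[OF assms] .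
  then show "((\<lambda>s. 4 * exp (-2 * \<sigma> x) * h t * sqrt (p_prod (p + s *\<^sub>R axis j 1)))
      has_real_derivative 4 * exp (-2 * \<sigma> x) * h t * sqrt (p_prod p) / (2 * p$j)) (at 0)"
    unfolding p_prod_add_scaleR_axis[OF \<open>p$j \<noteq> 0\<close>]
    using assms by (auto intro!: derivative_eq_intros simp: field_simps)
qed

lemma d_p_d_p_Hstar:
  assumes "p_prod p > 0"
  shows "d_p i (d_p j (Hstar \<sigma> h)) t x p
       = 4 * exp (-2 * \<sigma> x) * h t * sqrt (p_prod p) * metric_sign i j / (4 * p$i * p$j)"
proof (rule d_p_transform[OF assms])
  show "d_p j (Hstar \<sigma> h) t x q = 4 * exp (-2 * \<sigma> x) * h t * sqrt (p_prod q) / (2 * q$j)"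
    if "p_prod q > 0" for q
    by (rule d_p_Hstar[OF that])
  have nz: "p$i \<noteq> 0" "p$j \<noteq> 0" using p_prod_pos_nonzero[OF assms] by auto
  then show "((\<lambda>s. 4 * exp (-2 * \<sigma> x) * h t * sqrt (p_prod (p + s *\<^sub>R axis i 1))
        / (2 * (p + s *\<^sub>R axis i 1)$j))
      has_real_derivative
        4 * exp (-2 * \<sigma> x) * h t * sqrt (p_prod p) * metric_sign i j / (4 * p$i * p$j)) (at 0)"
    unfolding p_prod_add_scaleR_axis[OF nz(1)] nth_add_scaleR_axis
    using assms by (cases "i = j")
      (auto intro!: derivative_eq_intros simp: kdelta_def field_simps power2_eq_square)
qed

definition Hstar_g_up :: "(real^4 \<Rightarrow> real) \<Rightarrow> real^4 \<Rightarrow> real^4 \<Rightarrow> real^4^4" where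
  "Hstar_g_up \<sigma> x p =
     (\<chi> i j. exp (-2 * \<sigma> x) * sqrt (p_prod p) * metric_sign i j / (2 * p$i * p$j))"

definition Hstar_g_dn :: "(real^4 \<Rightarrow> real) \<Rightarrow> real^4 \<Rightarrow> real^4 \<Rightarrow> real^4^4" where
  "Hstar_g_dn \<sigma> x p =
     (\<chi> i j. exp (2 * \<sigma> x) * p$i * p$j * metric_sign i j / (2 * sqrt (p_prod p)))"

lemma g_up_Hstar:
  assumes "p_prod p > 0" "h t > 0"
  shows "g_up h (Hstar \<sigma> h) t x p = Hstar_g_up \<sigma> x p"
  unfolding g_up_def Hstar_g_up_def vec_eq_iff using assms p_prod_pos_nonzero[OF assms(1)]
  by (simp add: d_p_d_p_Hstar field_simps)

lemma Hstar_g_up_mult_g_dn: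
  assumes "p_prod p > 0"
  shows "Hstar_g_up \<sigma> x p ** Hstar_g_dn \<sigma> x p = mat 1"
proof -
  have "(Hstar_g_up \<sigma> x p ** Hstar_g_dn \<sigma> x p) $ i $ j
      = p$j / (4 * p$i) * (\<Sum>r\<in>UNIV. metric_sign i r * metric_sign r j)" for i j
    unfolding matrix_matrix_mult_def sum_distrib_left
    using assms p_prod_pos_nonzero[OF assms]
    by (auto intro!: sum.cong simp: Hstar_g_up_def Hstar_g_dn_def field_simps exp_minus)
  then show ?thesis
    using p_prod_pos_nonzero[OF assms]
    by (simp add: vec_eq_iff mat_def sum_metric_sign_square) (simp add: kdelta_def)
qed

lemma Hstar_g_dn_mult_g_up:
  assumes "p_prod p > 0"
  shows "Hstar_g_dn \<sigma> x p ** Hstar_g_up \<sigma> x p = mat 1"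
proof -
  have "(Hstar_g_dn \<sigma> x p ** Hstar_g_up \<sigma> x p) $ i $ j
      = p$i / (4 * p$j) * (\<Sum>r\<in>UNIV. metric_sign i r * metric_sign r j)" for i j
    unfolding matrix_matrix_mult_def sum_distrib_left
    using assms p_prod_pos_nonzero[OF assms]
    by (auto intro!: sum.cong simp: Hstar_g_up_def Hstar_g_dn_def field_simps exp_minus)
  then show ?thesis
    using p_prod_pos_nonzero[OF assms]
    by (simp add: vec_eq_iff mat_def sum_metric_sign_square) (simp add: kdelta_def)
qed

lemma g_dn_Hstar:
  assumes "p_prod p > 0" "h t > 0"
  shows "g_dn h (Hstar \<sigma> h) t x p = Hstar_g_dn \<sigma> x p"
  unfolding g_dn_def g_up_Hstar[of p h t, OF assms]
  using Hstar_g_up_mult_g_dn[OF assms(1)] Hstar_g_dn_mult_g_up[OF assms(1)]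
  by (rule matrix_inv_unique)

lemma d_p_g_up_Hstar:
  assumes "p_prod p > 0" "\<forall>t. h t > 0"
  shows "d_p k (\<lambda>t' x' p'. g_up h (Hstar \<sigma> h) t' x' p' $ j $ r) t x p
       = Hstar_g_up \<sigma> x p $ j $ r * (1/2 - kdelta j k - kdelta r k) / p$k"
proof (rule d_p_transform[OF assms(1)])
  show "g_up h (Hstar \<sigma> h) t x q $ j $ r = Hstar_g_up \<sigma> x q $ j $ r" if "p_prod q > 0" for q
    using g_up_Hstar[OF that] assms(2) by simp
  have nz: "p$k \<noteq> 0" "p$j \<noteq> 0" "p$r \<noteq> 0" using p_prod_pos_nonzero[OF assms(1)] by auto
  then show "((\<lambda>s. Hstar_g_up \<sigma> x (p + s *\<^sub>R axis k 1) $ j $ r) has_real_derivative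
      Hstar_g_up \<sigma> x p $ j $ r * (1/2 - kdelta j k - kdelta r k) / p$k) (at 0)"
    unfolding Hstar_g_up_def vec_lambda_beta p_prod_add_scaleR_axis[OF nz(1)] nth_add_scaleR_axis
    using assms(1) by (cases "j = k"; cases "r = k")
      (auto intro!: derivative_eq_intros simp: kdelta_def field_simps power2_eq_square)
qed

lemma d_p_g_dn_Hstar:
  assumes "p_prod p > 0" "\<forall>t. h t > 0"
  shows "d_p k (\<lambda>t' x' p'. g_dn h (Hstar \<sigma> h) t' x' p' $ i $ j) t x p
       = Hstar_g_dn \<sigma> x p $ i $ j * (kdelta i k + kdelta j k - 1/2) / p$k"
proof (rule d_p_transform[OF assms(1)])
  show "g_dn h (Hstar \<sigma> h) t x q $ i $ j = Hstar_g_dn \<sigma> x q $ i $ j" if "p_prod q > 0" for q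
    using g_dn_Hstar[OF that] assms(2) by simp
  have nz: "p$k \<noteq> 0" "p$i \<noteq> 0" "p$j \<noteq> 0" using p_prod_pos_nonzero[OF assms(1)] by auto
  then show "((\<lambda>s. Hstar_g_dn \<sigma> x (p + s *\<^sub>R axis k 1) $ i $ j) has_real_derivative
      Hstar_g_dn \<sigma> x p $ i $ j * (kdelta i k + kdelta j k - 1/2) / p$k) (at 0)"
    unfolding Hstar_g_dn_def vec_lambda_beta p_prod_add_scaleR_axis[OF nz(1)] nth_add_scaleR_axis
    using assms(1) by (cases "i = k"; cases "j = k")
      (auto intro!: derivative_eq_intros simp: kdelta_def field_simps power2_eq_square)
qed

lemma d_t_g_dn_Hstar:
  assumes "p_prod p > 0" "\<forall>t. h t > 0"
  shows "d_t (\<lambda>t' x' p'. g_dn h (Hstar \<sigma> h) t' x' p' $ i $ j) t x p = 0"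
proof -
  have "(\<lambda>s. g_dn h (Hstar \<sigma> h) s x p $ i $ j) = (\<lambda>s. Hstar_g_dn \<sigma> x p $ i $ j)"
    using g_dn_Hstar[OF assms(1)] assms(2) by auto
  then show ?thesis unfolding d_t_def by simp
qed

lemma has_real_derivative_pdiff:
  assumes "f differentiable (at x)"
  shows "((\<lambda>s. f (x + s *\<^sub>R axis k 1)) has_real_derivative pdiff k f x) (at 0)"
proof -
  have "(\<lambda>s::real. x + s *\<^sub>R axis k 1) differentiable (at 0)" by (intro derivative_intros)
  with assms have "(\<lambda>s. f (x + s *\<^sub>R axis k 1)) differentiable (at 0)"
    using differentiable_chain_at[of "\<lambda>s::real. x + s *\<^sub>R axis k 1" 0 f] by (simp add: o_def)
  then show ?thesis
    unfolding pdiff_def by (simp add: DERIV_deriv_iff_real_differentiable)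
qed

lemma d_x_g_dn_Hstar:
  assumes "p_prod p > 0" "\<forall>t. h t > 0" "\<sigma> differentiable (at x)"
  shows "d_x k (\<lambda>t' x' p'. g_dn h (Hstar \<sigma> h) t' x' p' $ i $ j) t x p
       = 2 * pdiff k \<sigma> x * Hstar_g_dn \<sigma> x p $ i $ j"
proof -
  define c where "c = p$i * p$j * metric_sign i j / (2 * sqrt (p_prod p))"
  have "(\<lambda>s. g_dn h (Hstar \<sigma> h) t (x + s *\<^sub>R axis k 1) p $ i $ j)
      = (\<lambda>s. exp (2 * \<sigma> (x + s *\<^sub>R axis k 1)) * c)"
    using g_dn_Hstar[OF assms(1)] assms(2) by (auto simp: Hstar_g_dn_def c_def)
  moreover have "Hstar_g_dn \<sigma> x p $ i $ j = exp (2 * \<sigma> x) * c"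
    by (simp add: Hstar_g_dn_def c_def)
  moreover have "((\<lambda>s. exp (2 * \<sigma> (x + s *\<^sub>R axis k 1)) * c)
      has_real_derivative 2 * pdiff k \<sigma> x * (exp (2 * \<sigma> x) * c)) (at 0)"
    by (auto intro!: derivative_eq_intros has_real_derivative_pdiff[OF assms(3)])
  ultimately show ?thesis
    unfolding d_x_def by (simp add: DERIV_imp_deriv)
qed

text \<open>The \<open>x\<close>-derivative \<open>2\<sigma>\<^sub>k g\<^sub>j\<^sub>r\<close> and the connection term
  \<open>4\<sigma>\<^sub>k p\<^sub>k \<partial>g\<^sub>j\<^sub>r/\<partial>p\<^sub>k = 4\<sigma>\<^sub>k g\<^sub>j\<^sub>r(\<delta>\<^sub>j\<^sub>k + \<delta>\<^sub>r\<^sub>k - 1/2)\<close> cancel except for the \<open>\<delta>\<close>-part.\<close>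

lemma delta_x_g_dn_Hstar:
  assumes "p_prod p > 0" "\<forall>t. h t > 0" "\<sigma> differentiable (at x)"
  shows "delta_x \<sigma> k (\<lambda>t' x' p'. g_dn h (Hstar \<sigma> h) t' x' p' $ j $ r) t x p
       = 4 * pdiff k \<sigma> x * Hstar_g_dn \<sigma> x p $ j $ r * (kdelta j k + kdelta r k)"
  unfolding delta_x_def d_x_g_dn_Hstar[OF assms] d_p_g_dn_Hstar[OF assms(1,2)]
  using p_prod_pos_nonzero[OF assms(1), of k] by (simp add: field_simps)

lemma delta_t_g_dn_Hstar:
  assumes "p_prod p > 0" "\<forall>t. h t > 0"
  shows "delta_t h (\<lambda>t' x' p'. g_dn h (Hstar \<sigma> h) t' x' p' $ l $ j) t x p = 0"
proof -
  have "(\<Sum>r\<in>UNIV. p$r * (Hstar_g_dn \<sigma> x p $ l $ j * (kdelta l r + kdelta j r - 1/2) / p$r))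
      = Hstar_g_dn \<sigma> x p $ l $ j * (\<Sum>r\<in>UNIV. kdelta l r + kdelta j r - 1/2)"
    unfolding sum_distrib_left using p_prod_pos_nonzero[OF assms(1)]
    by (intro sum.cong) auto
  also have "\<dots> = 0"
    using exhaust_4[of l] exhaust_4[of j] by (auto simp: sum_4 kdelta_def)
  finally show ?thesis
    unfolding delta_t_def d_t_g_dn_Hstar[OF assms] d_p_g_dn_Hstar[OF assms] by simp
qed

lemma cartan_A_Hstar:
  assumes "p_prod p > 0" "\<forall>t. h t > 0"
  shows "cartan_A \<sigma> h (Hstar \<sigma> h) i j t x p = 0"
  by (simp add: cartan_A_def delta_t_g_dn_Hstar[OF assms])

lemma cartan_H_contraction:
  fixes q :: "real^4" and s :: "4 \<Rightarrow> real"
  assumes "q$1 \<noteq> 0" "q$2 \<noteq> 0" "q$3 \<noteq> 0" "q$4 \<noteq> 0"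
  shows "(\<Sum>r\<in>UNIV.
            2 * s k * (metric_sign i r * metric_sign j r * q$j * q$r / (4 * q$i * q$r))
              * (kdelta j k + kdelta r k)
          + 2 * s j * (metric_sign i r * metric_sign k r * q$k * q$r / (4 * q$i * q$r))
              * (kdelta k j + kdelta r j)
          - 2 * s r * (metric_sign i r * metric_sign j k * q$j * q$k / (4 * q$i * q$r))
              * (kdelta j r + kdelta k r))
       = 4 * kdelta i j * kdelta i k * s i"
  using assms exhaust_4[of i] exhaust_4[of j] exhaust_4[of k]
  by (auto simp: sum_4 kdelta_def field_simps)

lemma cartan_C_contraction:
  fixes q :: "real^4"
  assumes "q$1 \<noteq> 0" "q$2 \<noteq> 0" "q$3 \<noteq> 0" "q$4 \<noteq> 0"
  shows "- (\<Sum>r\<in>UNIV. 1/2 *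
            ( metric_sign i r * metric_sign j r * q$i * q$r / (4 * q$j * q$r)
                * (1/2 - kdelta j k - kdelta r k) / q$k
            + metric_sign i r * metric_sign k r * q$i * q$r / (4 * q$k * q$r)
                * (1/2 - kdelta k j - kdelta r j) / q$j
            - metric_sign i r * metric_sign j k * q$i * q$r / (4 * q$j * q$k)
                * (1/2 - kdelta j r - kdelta k r) / q$r))
       = Cconst i j k * q$i / (q$j * q$k)"
  using assms exhaust_4[of i] exhaust_4[of j] exhaust_4[of k]
  by (auto simp: sum_4 kdelta_def Cconst_def field_simps)

lemma cartan_H_Hstar:
  assumes "p_prod p > 0" "\<forall>t. h t > 0" "\<sigma> differentiable (at x)"
  shows "cartan_H \<sigma> h (Hstar \<sigma> h) i j k t x p = 4 * kdelta i j * kdelta i k * pdiff i \<sigma> x"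
proof -
  have "cartan_H \<sigma> h (Hstar \<sigma> h) i j k t x p =
     (\<Sum>r\<in>UNIV.
            2 * pdiff k \<sigma> x * (metric_sign i r * metric_sign j r * p$j * p$r / (4 * p$i * p$r))
              * (kdelta j k + kdelta r k)
          + 2 * pdiff j \<sigma> x * (metric_sign i r * metric_sign k r * p$k * p$r / (4 * p$i * p$r))
              * (kdelta k j + kdelta r j)
          - 2 * pdiff r \<sigma> x * (metric_sign i r * metric_sign j k * p$j * p$k / (4 * p$i * p$r))
              * (kdelta j r + kdelta k r))"
    unfolding cartan_H_def delta_x_g_dn_Hstar[OF assms] g_up_Hstar[of p h t, OF assms(1) spec[OF assms(2)]]
    using p_prod_pos_nonzero[OF assms(1)] assms(1)
    by (intro sum.cong) (simp_all add: Hstar_g_up_def Hstar_g_dn_def field_simps exp_minus)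
  also have "\<dots> = 4 * kdelta i j * kdelta i k * pdiff i \<sigma> x"
    by (intro cartan_H_contraction p_prod_pos_nonzero[OF assms(1)])
  finally show ?thesis .
qed

lemma cartan_C_Hstar:
  assumes "p_prod p > 0" "\<forall>t. h t > 0"
  shows "cartan_C h (Hstar \<sigma> h) i j k t x p = Cconst i j k * p$i / (p$j * p$k)"
proof -
  have "cartan_C h (Hstar \<sigma> h) i j k t x p =
     - (\<Sum>r\<in>UNIV. 1/2 *
            ( metric_sign i r * metric_sign j r * p$i * p$r / (4 * p$j * p$r)
                * (1/2 - kdelta j k - kdelta r k) / p$k
            + metric_sign i r * metric_sign k r * p$i * p$r / (4 * p$k * p$r)
                * (1/2 - kdelta k j - kdelta r j) / p$j
            - metric_sign i r * metric_sign j k * p$i * p$r / (4 * p$j * p$k)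
                * (1/2 - kdelta j r - kdelta k r) / p$r))"
    unfolding cartan_C_def d_p_g_up_Hstar[OF assms] g_dn_Hstar[of p h t, OF assms(1) spec[OF assms(2)]]
    using p_prod_pos_nonzero[OF assms(1)] assms(1)
    by (intro arg_cong[where f = uminus] sum.cong)
      (simp_all add: Hstar_g_up_def Hstar_g_dn_def field_simps exp_minus)
  also have "\<dots> = Cconst i j k * p$i / (p$j * p$k)"
    by (intro cartan_C_contraction p_prod_pos_nonzero[OF assms(1)])
  finally show ?thesis .
qed

theorem mainTheorem2:
  fixes \<sigma> :: "real^4 \<Rightarrow> real" and h :: "real \<Rightarrow> real" and U :: "(real^4) set"
  assumes "open U"
    and "smooth_on U \<sigma>"
    and "\<not> (\<exists>c. \<forall>x\<in>U. \<sigma> x = c)"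
    and "smooth_real h"
    and "\<forall>t. h t > 0"
  shows "\<forall>t x p. x \<in> U \<and> p$1 * p$2 * p$3 * p$4 > 0 \<longrightarrow>
           (\<forall>i j. cartan_A \<sigma> h (Hstar \<sigma> h) i j t x p = 0)
         \<and> (\<forall>i j k. cartan_H \<sigma> h (Hstar \<sigma> h) i j k t x p
                    = 4 * kdelta i j * kdelta i k * pdiff i \<sigma> x)
         \<and> (\<forall>i j k. cartan_C h (Hstar \<sigma> h) i j k t x p
                    = Cconst i j k * p$i / (p$j * p$k))"
proof (intro allI impI)
  fix t :: real and x p :: "real^4"
  assume "x \<in> U \<and> p$1 * p$2 * p$3 * p$4 > 0"
  then have x: "x \<in> U" and p: "p_prod p > 0" by (simp_all add: p_prod_def)
  have "\<sigma> differentiable_on U"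
    using assms(2) unfolding smooth_on_def by (metis fold_Nil id_apply)
  with x have "\<sigma> differentiable (at x)"
    using differentiable_on_eq_differentiable_at[OF assms(1)] by blast
  then show "(\<forall>i j. cartan_A \<sigma> h (Hstar \<sigma> h) i j t x p = 0)
         \<and> (\<forall>i j k. cartan_H \<sigma> h (Hstar \<sigma> h) i j k t x p
                    = 4 * kdelta i j * kdelta i k * pdiff i \<sigma> x)
         \<and> (\<forall>i j k. cartan_C h (Hstar \<sigma> h) i j k t x p
                    = Cconst i j k * p$i / (p$j * p$k))"
    using cartan_A_Hstar[OF p assms(5)] cartan_H_Hstar[OF p assms(5)] cartan_C_Hstar[OF p assms(5)]
    by blast
qed

end
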